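(* Let $A'=(c^1,\ldots,c^m)$, $A''=(c^{m+1},\ldots,c^M)$, $A=(c^1,\ldots,c^M)$ be sequences of customer types and $B'=(s^1,\ldots,s^n)$, $B''=(s^{n+1},\ldots,s^N)$, $B=(s^1,\ldots,s^N)$ sequences of server types. Let $K',K'',K$ be the numbers of unmatched customers and $L',L'',L$ the numbers of unmatched servers in the unique complete FCFS matchings of $(A',B')$, of $(A'',B'')$ and of $(A,B)$ respectively. Then $K\le K'+K''$ and $L\le L'+L''$.
   Context: Let $\mathcal{C}=\{c_1,\ldots,c_I\}$ (customer types) and $\mathcal{S}=\{s_1,\ldots,s_J\}$ (server types) be finite sets and $G=(\mathcal{C},\mathcal{S},\mathcal{E})$, $\mathcal{E}\subseteq\mathcal{C}\times\mathcal{S}$, a connected bipartite compatibility graph; a customer of type $c_i$ and a server of type $s_j$ are compatible iff $(c_i,s_j)\in\mathcal{E}$. Given ordered sequences $(c^m)_{m\in T_1}$, $(s^n)_{n\in T_2}$ of types, a matching is a set $A\subseteq T_1\times T_2$ such that $(m,n)\in A\Rightarrow (c^m,s^n)\in\mathcal{E}$ and each index appears in at most one pair. It is complete if there is no unmatched $m$ and unmatched $n$ with $(c^m,s^n)\in\mathcal{E}$. It is FCFS if for every $(m,n)\in A$: for every $l<n$ with $(c^m,s^l)\in\mathcal{E}$ there is $k<m$ with $(k,l)\in A$, and for every $k<m$ with $(c^k,s^n)\in\mathcal{E}$ there is $l<n$ with $(k,l)\in A$. For finite index sets a complete FCFS matching exists and is unique. *)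

theory Defs
  imports Main
begin

text \<open>Sequences of types are lists; positions are 0-based list indices.
  A matching is a set of index pairs (customer position, server position).\<close>

definition bip_connected :: "'c set \<Rightarrow> 's set \<Rightarrow> ('c \<times> 's) set \<Rightarrow> bool" where
  "bip_connected C S E \<longleftrightarrow>
     (let R = {(Inl c, Inr s) | c s. (c, s) \<in> E} \<union> {(Inr s, Inl c) | c s. (c, s) \<in> E}
      in \<forall>x \<in> C <+> S. \<forall>y \<in> C <+> S. (x, y) \<in> R\<^sup>*)"

definition is_matching :: "('c \<times> 's) set \<Rightarrow> 'c list \<Rightarrow> 's list \<Rightarrow> (nat \<times> nat) set \<Rightarrow> bool" where
  "is_matching E cs ss A \<longleftrightarrow>
     A \<subseteq> {..<length cs} \<times> {..<length ss} \<and>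
     (\<forall>(m, n) \<in> A. (cs ! m, ss ! n) \<in> E) \<and>
     (\<forall>m n n'. (m, n) \<in> A \<longrightarrow> (m, n') \<in> A \<longrightarrow> n = n') \<and>
     (\<forall>m m' n. (m, n) \<in> A \<longrightarrow> (m', n) \<in> A \<longrightarrow> m = m')"

definition unmatched_cust :: "'c list \<Rightarrow> (nat \<times> nat) set \<Rightarrow> nat set" where
  "unmatched_cust cs A = {m. m < length cs \<and> (\<nexists>n. (m, n) \<in> A)}"

definition unmatched_serv :: "'s list \<Rightarrow> (nat \<times> nat) set \<Rightarrow> nat set" where
  "unmatched_serv ss A = {n. n < length ss \<and> (\<nexists>m. (m, n) \<in> A)}"

definition is_complete :: "('c \<times> 's) set \<Rightarrow> 'c list \<Rightarrow> 's list \<Rightarrow> (nat \<times> nat) set \<Rightarrow> bool" where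
  "is_complete E cs ss A \<longleftrightarrow>
     \<not> (\<exists>m \<in> unmatched_cust cs A. \<exists>n \<in> unmatched_serv ss A. (cs ! m, ss ! n) \<in> E)"

definition is_FCFS :: "('c \<times> 's) set \<Rightarrow> 'c list \<Rightarrow> 's list \<Rightarrow> (nat \<times> nat) set \<Rightarrow> bool" where
  "is_FCFS E cs ss A \<longleftrightarrow>
     (\<forall>(m, n) \<in> A.
        (\<forall>l < n. (cs ! m, ss ! l) \<in> E \<longrightarrow> (\<exists>k < m. (k, l) \<in> A)) \<and>
        (\<forall>k < m. (cs ! k, ss ! n) \<in> E \<longrightarrow> (\<exists>l < n. (k, l) \<in> A)))"

definition complete_FCFS :: "('c \<times> 's) set \<Rightarrow> 'c list \<Rightarrow> 's list \<Rightarrow> (nat \<times> nat) set \<Rightarrow> bool" where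
  "complete_FCFS E cs ss A \<longleftrightarrow>
     is_matching E cs ss A \<and> is_complete E cs ss A \<and> is_FCFS E cs ss A"

end

theory Submission
  imports Defs
begin

text \<open>A complete FCFS matching is the greedy one: scanning customers in order, each
  customer takes the earliest still unused compatible server, if any. So its size is the
  number of successful greedy steps. Serving \<open>A1 @ A2\<close> from \<open>B1 @ B2\<close>, the customers of
  \<open>A1\<close> use exactly the servers of \<open>B1\<close> they use in isolation, plus a set \<open>X\<close> of servers
  in \<open>B2\<close>. Each extra used server costs the customers of \<open>A2\<close> at most one successful step,
  while those \<open>card X\<close> servers were themselves matched; hence the matching of the
  concatenation is at least as large as the two matchings together. The number of
  unmatched customers (servers) is the length of the sequence minus the matching size.\<close>

definition admissible :: "('c \<times> 's) set \<Rightarrow> 's list \<Rightarrow> nat set \<Rightarrow> 'c \<Rightarrow> nat \<Rightarrow> bool" where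
  "admissible E ss U c n \<longleftrightarrow> n < length ss \<and> n \<notin> U \<and> (c, ss ! n) \<in> E"

definition first_free :: "('c \<times> 's) set \<Rightarrow> 's list \<Rightarrow> nat set \<Rightarrow> 'c \<Rightarrow> nat option" where
  "first_free E ss U c =
     (if \<exists>n. admissible E ss U c n then Some (LEAST n. admissible E ss U c n) else None)"

fun greedy_used :: "('c \<times> 's) set \<Rightarrow> 's list \<Rightarrow> nat set \<Rightarrow> 'c list \<Rightarrow> nat set" where
  "greedy_used E ss U [] = U"
| "greedy_used E ss U (c # cs) =
     (case first_free E ss U c of
        None \<Rightarrow> greedy_used E ss U cs
      | Some n \<Rightarrow> greedy_used E ss (insert n U) cs)"

fun greedy_count :: "('c \<times> 's) set \<Rightarrow> 's list \<Rightarrow> nat set \<Rightarrow> 'c list \<Rightarrow> nat" where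
  "greedy_count E ss U [] = 0"
| "greedy_count E ss U (c # cs) =
     (case first_free E ss U c of
        None \<Rightarrow> greedy_count E ss U cs
      | Some n \<Rightarrow> Suc (greedy_count E ss (insert n U) cs))"

lemma first_free_eq_None_iff:
  "first_free E ss U c = None \<longleftrightarrow> (\<forall>n. \<not> admissible E ss U c n)"
  by (simp add: first_free_def)

lemma first_free_eq_Some_iff:
  "first_free E ss U c = Some n \<longleftrightarrow>
     admissible E ss U c n \<and> (\<forall>l<n. \<not> admissible E ss U c l)"
proof
  assume "first_free E ss U c = Some n"
  then have "\<exists>n. admissible E ss U c n" and "n = (LEAST n. admissible E ss U c n)"
    by (auto simp: first_free_def split: if_splits)
  then show "admissible E ss U c n \<and> (\<forall>l<n. \<not> admissible E ss U c l)"
    by (metis LeastI_ex not_less_Least)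
next
  assume "admissible E ss U c n \<and> (\<forall>l<n. \<not> admissible E ss U c l)"
  then have "(LEAST n. admissible E ss U c n) = n"
    by (intro Least_equality) (auto simp: not_less[symmetric])
  then show "first_free E ss U c = Some n"
    using \<open>admissible E ss U c n \<and> _\<close> by (auto simp: first_free_def)
qed

lemma card_greedy_used:
  "finite U \<Longrightarrow> finite (greedy_used E ss U cs)
     \<and> card (greedy_used E ss U cs) = card U + greedy_count E ss U cs"
proof (induction cs arbitrary: U)
  case (Cons c cs)
  show ?case
  proof (cases "first_free E ss U c")
    case (Some n)
    then have "n \<notin> U" by (simp add: first_free_eq_Some_iff admissible_def)
    with Some Cons.prems show ?thesis using Cons.IH[of "insert n U"] by simp
  qed (use Cons in simp)
qed simp

lemma greedy_count_append:
  "greedy_count E ss U (xs @ ys) =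
     greedy_count E ss U xs + greedy_count E ss (greedy_used E ss U xs) ys"
  by (induction xs arbitrary: U) (auto split: option.splits)

text \<open>Blocking one more server either changes nothing or diverts the greedy scan onto a
  path that is again one blocked server apart from the original one.\<close>

lemma greedy_count_insert:
  "greedy_count E ss (insert y U) cs \<le> greedy_count E ss U cs
   \<and> greedy_count E ss U cs \<le> Suc (greedy_count E ss (insert y U) cs)"
proof (induction cs arbitrary: U y)
  case (Cons c cs)
  show ?case
  proof (cases "y \<in> U")
    case False
    show ?thesis
    proof (cases "first_free E ss U c")
      case None
      then have "first_free E ss (insert y U) c = None"
        by (auto simp: first_free_eq_None_iff admissible_def)
      with None show ?thesis using Cons.IH[of y U] by simp
    next
      case (Some z)
      show ?thesis
      proof (cases "z = y")
        case False
        with Some have "first_free E ss (insert y U) c = Some z"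
          by (auto simp: first_free_eq_Some_iff admissible_def)
        with Some show ?thesis
          using Cons.IH[of y "insert z U"] by (simp add: insert_commute)
      next
        case True
        with Some show ?thesis
          using Cons.IH[of y U] Cons.IH[where U = "insert y U"]
          by (cases "first_free E ss (insert y U) c") auto
      qed
    qed
  qed (simp add: insert_absorb)
qed simp

lemma greedy_count_union:
  assumes "finite D"
  shows "greedy_count E ss (U \<union> D) cs \<le> greedy_count E ss U cs
   \<and> greedy_count E ss U cs \<le> greedy_count E ss (U \<union> D) cs + card D"
  using assms
proof (induction D rule: finite_induct)
  case (insert x F)
  then show ?case
    using greedy_count_insert[of E ss x "U \<union> F" cs] by auto
qed simp

lemma greedy_used_append_servers:
  "greedy_used E (B1 @ B2) U cs \<inter> {..<length B1} =
     greedy_used E B1 (U \<inter> {..<length B1}) cs"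
proof (induction cs arbitrary: U)
  case (Cons c cs)
  let ?n = "length B1"
  show ?case
  proof (cases "first_free E B1 (U \<inter> {..<?n}) c")
    case (Some x)
    then have "first_free E (B1 @ B2) U c = Some x"
      by (auto simp: first_free_eq_Some_iff admissible_def nth_append)
    moreover have "insert x U \<inter> {..<?n} = insert x (U \<inter> {..<?n})"
      using Some by (auto simp: first_free_eq_Some_iff admissible_def)
    ultimately show ?thesis using Some Cons.IH[of "insert x U"] by simp
  next
    case None
    show ?thesis
    proof (cases "first_free E (B1 @ B2) U c")
      case (Some y)
      have "?n \<le> y"
      proof (rule ccontr)
        assume "\<not> ?n \<le> y"
        with Some have "admissible E B1 (U \<inter> {..<?n}) c y"
          by (auto simp: first_free_eq_Some_iff admissible_def nth_append)
        with None show False by (simp add: first_free_eq_None_iff)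
      qed
      then have "insert y U \<inter> {..<?n} = U \<inter> {..<?n}" by auto
      then show ?thesis using None Some Cons.IH[of "insert y U"] by simp
    qed (use None Cons.IH[of U] in simp)
  qed
qed simp

lemma admissible_shift:
  "admissible E (B1 @ B2) ({..<length B1} \<union> (\<lambda>x. x + length B1) ` U) c l \<longleftrightarrow>
     (\<exists>j. l = j + length B1 \<and> admissible E B2 U c j)"
proof
  assume l: "admissible E (B1 @ B2) ({..<length B1} \<union> (\<lambda>x. x + length B1) ` U) c l"
  then have "length B1 \<le> l" by (simp add: admissible_def)
  with l show "\<exists>j. l = j + length B1 \<and> admissible E B2 U c j"
    by (intro exI[of _ "l - length B1"]) (auto simp: admissible_def nth_append image_iff)
qed (auto simp: admissible_def nth_append)

lemma greedy_count_shift: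
  "greedy_count E (B1 @ B2) ({..<length B1} \<union> (\<lambda>x. x + length B1) ` U) cs =
     greedy_count E B2 U cs"
proof (induction cs arbitrary: U)
  case (Cons c cs)
  let ?n = "length B1"
  let ?U = "{..<?n} \<union> (\<lambda>x. x + ?n) ` U"
  show ?case
  proof (cases "first_free E B2 U c")
    case None
    then have "first_free E (B1 @ B2) ?U c = None"
      by (simp add: first_free_eq_None_iff admissible_shift)
    then show ?thesis using None Cons.IH[of U] by simp
  next
    case (Some x)
    then have "first_free E (B1 @ B2) ?U c = Some (x + ?n)"
      by (auto simp: first_free_eq_Some_iff admissible_shift)
    moreover have "insert (x + ?n) ?U = {..<?n} \<union> (\<lambda>x. x + ?n) ` insert x U" by auto
    ultimately show ?thesis using Some Cons.IH[of "insert x U"] by simp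
  qed
qed simp

definition servers_before :: "(nat \<times> nat) set \<Rightarrow> nat \<Rightarrow> nat set" where
  "servers_before M j = {n. \<exists>m<j. (m, n) \<in> M}"

lemma is_FCFS_earlier_server_taken:
  "is_FCFS E cs ss M \<Longrightarrow> (m, n) \<in> M \<Longrightarrow> l < n \<Longrightarrow> (cs ! m, ss ! l) \<in> E
    \<Longrightarrow> \<exists>k<m. (k, l) \<in> M"
  unfolding is_FCFS_def by (drule bspec) auto

lemma is_FCFS_earlier_customer_served:
  "is_FCFS E cs ss M \<Longrightarrow> (m, n) \<in> M \<Longrightarrow> k < m \<Longrightarrow> (cs ! k, ss ! n) \<in> E
    \<Longrightarrow> \<exists>l<n. (k, l) \<in> M"
  unfolding is_FCFS_def by (drule bspec) auto

lemma first_free_complete_FCFS_matched: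
  assumes M: "complete_FCFS E cs ss M" and jn: "(j, n) \<in> M"
  shows "first_free E ss (servers_before M j) (cs ! j) = Some n"
proof -
  have match: "is_matching E cs ss M" and fcfs: "is_FCFS E cs ss M"
    using M by (simp_all add: complete_FCFS_def)
  have "n < length ss" "(cs ! j, ss ! n) \<in> E"
    using match jn by (auto simp: is_matching_def)
  moreover have "n \<notin> servers_before M j"
    using match jn unfolding is_matching_def servers_before_def by blast
  moreover have "l \<in> servers_before M j" if "l < n" "(cs ! j, ss ! l) \<in> E" for l
    using is_FCFS_earlier_server_taken[OF fcfs jn that] by (simp add: servers_before_def)
  ultimately show ?thesis by (auto simp: first_free_eq_Some_iff admissible_def)
qed

lemma first_free_complete_FCFS_unmatched:
  assumes M: "complete_FCFS E cs ss M" and j: "j < length cs" and unm: "\<nexists>n. (j, n) \<in> M"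
  shows "first_free E ss (servers_before M j) (cs ! j) = None"
  unfolding first_free_eq_None_iff
proof (intro allI notI)
  fix n assume "admissible E ss (servers_before M j) (cs ! j) n"
  then have n: "n < length ss" "(cs ! j, ss ! n) \<in> E" "\<forall>m<j. (m, n) \<notin> M"
    by (auto simp: admissible_def servers_before_def)
  show False
  proof (cases "\<exists>k. (k, n) \<in> M")
    case True
    then obtain k where kn: "(k, n) \<in> M" by blast
    with n unm have "j < k" by (metis linorder_neqE_nat)
    have "is_FCFS E cs ss M" using M by (simp add: complete_FCFS_def)
    from is_FCFS_earlier_customer_served[OF this kn \<open>j < k\<close> n(2)] unm show False by blast
  next
    case False
    with M j n unm show False
      unfolding complete_FCFS_def is_complete_def unmatched_cust_def unmatched_serv_def
      by blast
  qed
qed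

lemma card_complete_FCFS_suffix:
  assumes M: "complete_FCFS E cs ss M" and "j \<le> length cs"
  shows "card {p \<in> M. j \<le> fst p} = greedy_count E ss (servers_before M j) (drop j cs)"
  using \<open>j \<le> length cs\<close>
proof (induction j rule: inc_induct)
  have "M \<subseteq> {..<length cs} \<times> {..<length ss}"
    using M by (simp add: complete_FCFS_def is_matching_def)
  then have "{p \<in> M. length cs \<le> fst p} = {}" by auto
  then have "card {p \<in> M. length cs \<le> fst p} = 0" by (metis card.empty)
  then show "card {p \<in> M. length cs \<le> fst p} =
      greedy_count E ss (servers_before M (length cs)) (drop (length cs) cs)"
    by simp
next
  case (step j)
  have fin: "finite M" and inj: "\<And>m n n'. (m, n) \<in> M \<Longrightarrow> (m, n') \<in> M \<Longrightarrow> n = n'"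
    using M by (auto simp: complete_FCFS_def is_matching_def intro: finite_subset)
  have drop: "drop j cs = cs ! j # drop (Suc j) cs"
    using step.hyps by (simp add: Cons_nth_drop_Suc)
  show ?case
  proof (cases "\<exists>n. (j, n) \<in> M")
    case True
    then obtain n where jn: "(j, n) \<in> M" by blast
    have "servers_before M (Suc j) = insert n (servers_before M j)"
      using jn inj by (auto simp: servers_before_def less_Suc_eq)
    moreover have "{p \<in> M. j \<le> fst p} = insert (j, n) {p \<in> M. Suc j \<le> fst p}"
      using jn inj by (auto simp: Suc_le_eq le_eq_less_or_eq)
    ultimately show ?thesis
      using step.IH fin drop first_free_complete_FCFS_matched[OF M jn] by simp
  next
    case False
    then have "servers_before M (Suc j) = servers_before M j"
      and "{p \<in> M. j \<le> fst p} = {p \<in> M. Suc j \<le> fst p}"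
      by (auto simp: servers_before_def less_Suc_eq le_eq_less_or_eq)
    then show ?thesis
      using step.IH drop first_free_complete_FCFS_unmatched[OF M step.hyps(2) False] by simp
  qed
qed

lemma card_complete_FCFS:
  "complete_FCFS E cs ss M \<Longrightarrow> card M = greedy_count E ss {} cs"
  using card_complete_FCFS_suffix[of E cs ss M 0] by (simp add: servers_before_def)

lemma card_complete_FCFS_append:
  assumes M1: "complete_FCFS E A1 B1 M1" and M2: "complete_FCFS E A2 B2 M2"
    and M: "complete_FCFS E (A1 @ A2) (B1 @ B2) M"
  shows "card M1 + card M2 \<le> card M"
proof -
  let ?B = "B1 @ B2" and ?B1 = "{..<length B1}"
  define W where "W = greedy_used E ?B {} A1"
  define X where "X = W - ?B1"
  have W: "finite W" "card W = greedy_count E ?B {} A1"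
    using card_greedy_used[of "{}" E ?B A1] by (auto simp: W_def)
  have "W \<inter> ?B1 = greedy_used E B1 {} A1"
    using greedy_used_append_servers[of E B1 B2 "{}" A1] by (simp add: W_def)
  then have "card (W \<inter> ?B1) = card M1"
    using card_greedy_used[of "{}" E B1 A1] card_complete_FCFS[OF M1] by simp
  moreover have "card W = card (W \<inter> ?B1) + card X"
    using W(1) card_Int_Diff by (simp add: X_def)
  ultimately have "card M1 + card X = greedy_count E ?B {} A1"
    using W(2) by simp
  moreover have "card M = greedy_count E ?B {} A1 + greedy_count E ?B W A2"
    using card_complete_FCFS[OF M] by (simp add: greedy_count_append W_def)
  moreover have "greedy_count E ?B (?B1 \<union> X) A2 \<le> greedy_count E ?B W A2"
    using greedy_count_union[of ?B1 E ?B W A2] by (simp add: X_def Un_commute)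
  moreover have "card M2 \<le> greedy_count E ?B (?B1 \<union> X) A2 + card X"
    using greedy_count_union[of X E ?B ?B1 A2] W(1) greedy_count_shift[of E B1 B2 "{}" A2]
      card_complete_FCFS[OF M2] by (simp add: X_def)
  ultimately show ?thesis by linarith
qed

lemma card_unmatched_add_card:
  assumes "is_matching E cs ss M"
  shows "card (unmatched_cust cs M) + card M = length cs"
    and "card (unmatched_serv ss M) + card M = length ss"
proof -
  have sub: "fst ` M \<subseteq> {..<length cs}" "snd ` M \<subseteq> {..<length ss}"
    and "inj_on fst M" "inj_on snd M"
    using assms by (auto simp: is_matching_def inj_on_def)
  then have card: "card (fst ` M) = card M" "card (snd ` M) = card M"
    by (simp_all add: card_image)
  have "unmatched_cust cs M = {..<length cs} - fst ` M"
    and "unmatched_serv ss M = {..<length ss} - snd ` M"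
    by (force simp: unmatched_cust_def unmatched_serv_def)+
  then show "card (unmatched_cust cs M) + card M = length cs"
    and "card (unmatched_serv ss M) + card M = length ss"
    using sub card card_mono[OF finite_lessThan sub(1)] card_mono[OF finite_lessThan sub(2)]
    by (simp_all add: card_Diff_subset finite_subset)
qed

theorem lemma3p2:
  fixes C :: "'c set" and S :: "'s set" and E :: "('c \<times> 's) set"
    and A1 A2 :: "'c list" and B1 B2 :: "'s list"
    and M1 M2 M :: "(nat \<times> nat) set"
  assumes "finite C" and "finite S" and "E \<subseteq> C \<times> S" and "bip_connected C S E"
    and "set A1 \<subseteq> C" and "set A2 \<subseteq> C" and "set B1 \<subseteq> S" and "set B2 \<subseteq> S"
    and "complete_FCFS E A1 B1 M1"
    and "complete_FCFS E A2 B2 M2"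
    and "complete_FCFS E (A1 @ A2) (B1 @ B2) M"
  shows "card (unmatched_cust (A1 @ A2) M)
           \<le> card (unmatched_cust A1 M1) + card (unmatched_cust A2 M2)
       \<and> card (unmatched_serv (B1 @ B2) M)
           \<le> card (unmatched_serv B1 M1) + card (unmatched_serv B2 M2)"
proof -
  have "is_matching E A1 B1 M1" "is_matching E A2 B2 M2" "is_matching E (A1 @ A2) (B1 @ B2) M"
    using assms(9-11) by (simp_all add: complete_FCFS_def)
  with card_complete_FCFS_append[OF assms(9-11)] show ?thesis
    by (fastforce dest: card_unmatched_add_card)
qed

end
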